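(* Let $(X,T)$ be a minimal dendric subshift over the finite alphabet $\mathcal{A}$. Let $$H=\Big\{\sum_{a\in\mathcal{A}}\sum_{k\in K_a}\alpha(a,k)\,\chi_{T^k([a])}\ :\ K_a\subseteq\mathbb{Z}\text{ finite},\ \alpha(a,k)\in\mathbb{Z}\Big\}\subseteq C(X,\mathbb{Z}).$$ Then for every $v\in\mathcal{L}(X)$, the characteristic function $\chi_{[v]}$ belongs to $H$.
   Context: $T$ is the shift on $\mathcal{A}^{\mathbb Z}$, $(X,T)$ a subshift (closed shift-invariant subset), minimal if it has no nonempty proper closed invariant subset. $\mathcal{L}(X)$ is the set of finite factors of elements of $X$. For $w\in\mathcal{L}(X)$ let $L(w)=\{a: aw\in\mathcal{L}(X)\}$, $R(w)=\{b: wb\in\mathcal{L}(X)\}$, $E(w)=\{(a,b): awb\in\mathcal{L}(X)\}$; the extension graph of $w$ is the bipartite graph on the disjoint union of $L(w)$ and $R(w)$ with edge set $E(w)$. A minimal subshift is dendric if every extension graph (including that of the empty word) is a tree. For a word $v$, $[v]=\{x\in X: x_0\cdots x_{|v|-1}=v\}$; $\chi_A$ denotes the characteristic function of $A\subseteq X$. *)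

theory Defs
  imports "HOL-Analysis.Analysis"
begin

text \<open>Points of A^Z are functions int => 'a. shiftpow k is T^k, T the left shift.\<close>

definition shiftpow :: "int \<Rightarrow> (int \<Rightarrow> 'a) \<Rightarrow> (int \<Rightarrow> 'a)" where
  "shiftpow k x = (\<lambda>n. x (n + k))"

abbreviation shift :: "(int \<Rightarrow> 'a) \<Rightarrow> (int \<Rightarrow> 'a)" where
  "shift \<equiv> shiftpow 1"

definition subshift :: "'a set \<Rightarrow> (int \<Rightarrow> 'a) set \<Rightarrow> bool" where
  "subshift A X \<longleftrightarrow> finite A \<and>
     closedin (product_topology (\<lambda>_::int. discrete_topology A) UNIV) X \<and>
     shift ` X = X"

definition minimal_subshift :: "'a set \<Rightarrow> (int \<Rightarrow> 'a) set \<Rightarrow> bool" where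
  "minimal_subshift A X \<longleftrightarrow> subshift A X \<and> X \<noteq> {} \<and>
     (\<forall>Y. Y \<subseteq> X \<and> Y \<noteq> {} \<and> subshift A Y \<longrightarrow> Y = X)"

definition occurs_at :: "'a list \<Rightarrow> (int \<Rightarrow> 'a) \<Rightarrow> int \<Rightarrow> bool" where
  "occurs_at w x i \<longleftrightarrow> (\<forall>j<length w. x (i + int j) = w ! j)"

definition lang :: "(int \<Rightarrow> 'a) set \<Rightarrow> 'a list set" where
  "lang X = {w. \<exists>x\<in>X. \<exists>i. occurs_at w x i}"

definition Lext :: "(int \<Rightarrow> 'a) set \<Rightarrow> 'a list \<Rightarrow> 'a set" where
  "Lext X w = {a. a # w \<in> lang X}"

definition Rext :: "(int \<Rightarrow> 'a) set \<Rightarrow> 'a list \<Rightarrow> 'a set" where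
  "Rext X w = {b. w @ [b] \<in> lang X}"

definition Eext :: "(int \<Rightarrow> 'a) set \<Rightarrow> 'a list \<Rightarrow> ('a \<times> 'a) set" where
  "Eext X w = {(a, b). a # w @ [b] \<in> lang X}"

text \<open>Extension graph: vertices Inl a (a in L(w)) and Inr b (b in R(w)),
  undirected edges {Inl a, Inr b} for (a,b) in E(w).\<close>
definition ext_vertices :: "(int \<Rightarrow> 'a) set \<Rightarrow> 'a list \<Rightarrow> ('a + 'a) set" where
  "ext_vertices X w = Inl ` Lext X w \<union> Inr ` Rext X w"

definition ext_adj :: "(int \<Rightarrow> 'a) set \<Rightarrow> 'a list \<Rightarrow> ('a + 'a) \<Rightarrow> ('a + 'a) \<Rightarrow> bool" where
  "ext_adj X w u v \<longleftrightarrow>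
     (\<exists>a b. (a, b) \<in> Eext X w \<and> ((u = Inl a \<and> v = Inr b) \<or> (u = Inr b \<and> v = Inl a)))"

definition graph_connected :: "'v set \<Rightarrow> ('v \<Rightarrow> 'v \<Rightarrow> bool) \<Rightarrow> bool" where
  "graph_connected V E \<longleftrightarrow> V \<noteq> {} \<and>
     (\<forall>u\<in>V. \<forall>v\<in>V. (\<lambda>x y. x \<in> V \<and> y \<in> V \<and> E x y)\<^sup>*\<^sup>* u v)"

definition graph_acyclic :: "'v set \<Rightarrow> ('v \<Rightarrow> 'v \<Rightarrow> bool) \<Rightarrow> bool" where
  "graph_acyclic V E \<longleftrightarrow> \<not> (\<exists>cs. length cs \<ge> 3 \<and> distinct cs \<and> set cs \<subseteq> V \<and>
      (\<forall>i. Suc i < length cs \<longrightarrow> E (cs ! i) (cs ! Suc i)) \<and> E (last cs) (hd cs))"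

definition graph_tree :: "'v set \<Rightarrow> ('v \<Rightarrow> 'v \<Rightarrow> bool) \<Rightarrow> bool" where
  "graph_tree V E \<longleftrightarrow> graph_connected V E \<and> graph_acyclic V E"

definition dendric :: "'a set \<Rightarrow> (int \<Rightarrow> 'a) set \<Rightarrow> bool" where
  "dendric A X \<longleftrightarrow> minimal_subshift A X \<and>
     (\<forall>w\<in>lang X. graph_tree (ext_vertices X w) (ext_adj X w))"

definition cyl :: "(int \<Rightarrow> 'a) set \<Rightarrow> 'a list \<Rightarrow> (int \<Rightarrow> 'a) set" where
  "cyl X v = {x\<in>X. occurs_at v x 0}"

text \<open>The group H of integer combinations of chi_{T^k [a]}, as functions X -> Z
  (compared on X only).\<close>
definition Hgrp :: "'a set \<Rightarrow> (int \<Rightarrow> 'a) set \<Rightarrow> ((int \<Rightarrow> 'a) \<Rightarrow> int) set" where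
  "Hgrp A X = {f. \<exists>K \<alpha>. finite K \<and> K \<subseteq> A \<times> UNIV \<and>
      (\<forall>x\<in>X. f x = (\<Sum>(a, k)\<in>K. \<alpha> (a, k) * indicator (shiftpow k ` cyl X [a]) x))}"

end

(* Induction on the length of v, proving the claim for occurrences of v at an arbitrary position i.
   The empty word and single letters are immediate, since the generators of H are exactly the
   functions x \<mapsto> [x i = a]. For v = c w d, acyclicity of the extension graph of w means that
   deleting its edge (c, d) separates c from d; let S be the side containing c. An occurrence of w
   with extension (a, b) \<noteq> (c, d) has a and b on the same side, so
     chi_[cwd] = sum over a in S of chi_[aw]  -  sum over b in S of chi_(T^-1 [wb]),
   and the right-hand side lies in H by induction. *)

theory Submission
  imports Defs "HOL-Library.Transitive_Closure_Table"
begin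

lemma subshift_values: "subshift A X \<Longrightarrow> x \<in> X \<Longrightarrow> x n \<in> A"
  unfolding subshift_def using closedin_subset by fastforce

lemma shiftpow_add: "shiftpow k (shiftpow l x) = shiftpow (k + l) x"
  unfolding shiftpow_def by (simp add: ac_simps)

lemma shiftpow_apply [simp]: "shiftpow k x n = x (n + k)"
  unfolding shiftpow_def ..

lemma shiftpow_0 [simp]: "shiftpow 0 x = x"
  unfolding shiftpow_def by simp

lemma shiftpow_in_subshift:
  assumes "subshift A X" "x \<in> X"
  shows "shiftpow k x \<in> X"
proof (induction k rule: int_induct[where k = 0])
  case base
  show ?case using assms(2) by simp
next
  case (step1 k)
  then have "shift (shiftpow k x) \<in> X" using assms(1) unfolding subshift_def by blast
  then show ?case by (simp only: shiftpow_add add.commute)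
next
  case (step2 k)
  then obtain y where "y \<in> X" "shiftpow k x = shift y" using assms(1) unfolding subshift_def by blast
  then have "shiftpow (k - 1) x = y"
    using shiftpow_add[of "-1" k x] shiftpow_add[of "-1" 1 y] by simp
  with \<open>y \<in> X\<close> show ?case by simp
qed

lemma occurs_at_Nil [simp]: "occurs_at [] x i"
  unfolding occurs_at_def by simp

lemma occurs_at_Cons: "occurs_at (a # u) x i \<longleftrightarrow> x i = a \<and> occurs_at u x (i + 1)"
  unfolding occurs_at_def by (simp add: All_less_Suc2 ac_simps)

lemma occurs_at_singleton [simp]: "occurs_at [a] x i \<longleftrightarrow> x i = a"
  by (simp add: occurs_at_Cons)

lemma occurs_at_append:
  "occurs_at (u @ v) x i \<longleftrightarrow> occurs_at u x i \<and> occurs_at v x (i + int (length u))"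
  by (induction u arbitrary: i) (auto simp: occurs_at_Cons ac_simps)

lemma occurs_at_in_lang: "x \<in> X \<Longrightarrow> occurs_at u x i \<Longrightarrow> u \<in> lang X"
  unfolding lang_def by blast

lemma lang_appendD:
  assumes "u @ v \<in> lang X"
  shows "u \<in> lang X \<and> v \<in> lang X"
proof -
  obtain x i where "x \<in> X" "occurs_at (u @ v) x i" using assms unfolding lang_def by blast
  then show ?thesis by (auto simp: occurs_at_append intro: occurs_at_in_lang)
qed

lemma Hgrp_iff:
  "f \<in> Hgrp A X \<longleftrightarrow> (\<exists>K \<alpha>. finite K \<and> K \<subseteq> A \<times> UNIV \<and>
     (\<forall>x\<in>X. f x = (\<Sum>p\<in>K. \<alpha> p * indicator (shiftpow (snd p) ` cyl X [fst p]) x)))"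
  unfolding Hgrp_def by (simp add: split_beta)

lemma Hgrp_cong: "f \<in> Hgrp A X \<Longrightarrow> (\<And>x. x \<in> X \<Longrightarrow> g x = f x) \<Longrightarrow> g \<in> Hgrp A X"
  unfolding Hgrp_iff by auto

lemma Hgrp_zero: "(\<lambda>_. 0) \<in> Hgrp A X"
  unfolding Hgrp_iff by (intro exI[of _ "{}"]) simp

lemma Hgrp_uminus:
  assumes "f \<in> Hgrp A X"
  shows "(\<lambda>x. - f x) \<in> Hgrp A X"
proof -
  obtain K \<alpha> where "finite K" "K \<subseteq> A \<times> UNIV"
    "\<forall>x\<in>X. f x = (\<Sum>p\<in>K. \<alpha> p * indicator (shiftpow (snd p) ` cyl X [fst p]) x)"
    using assms unfolding Hgrp_iff by blast
  then show ?thesis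
    unfolding Hgrp_iff by (intro exI[of _ K] exI[of _ "\<lambda>p. - \<alpha> p"]) (simp add: sum_negf)
qed

lemma Hgrp_add:
  assumes "f \<in> Hgrp A X" "g \<in> Hgrp A X"
  shows "(\<lambda>x. f x + g x) \<in> Hgrp A X"
proof -
  let ?I = "\<lambda>p x. indicator (shiftpow (snd p) ` cyl X [fst p]) x :: int"
  obtain K \<alpha> where K: "finite K" "K \<subseteq> A \<times> UNIV" "\<forall>x\<in>X. f x = (\<Sum>p\<in>K. \<alpha> p * ?I p x)"
    using assms(1) unfolding Hgrp_iff by blast
  obtain L \<beta> where L: "finite L" "L \<subseteq> A \<times> UNIV" "\<forall>x\<in>X. g x = (\<Sum>p\<in>L. \<beta> p * ?I p x)"
    using assms(2) unfolding Hgrp_iff by blast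
  define \<gamma> where "\<gamma> p = (if p \<in> K then \<alpha> p else 0) + (if p \<in> L then \<beta> p else 0)" for p
  have extend: "(\<Sum>p\<in>K \<union> L. (if p \<in> M then \<delta> p else 0) * h p) = (\<Sum>p\<in>M. \<delta> p * h p)"
    if "M \<subseteq> K \<union> L" for M \<delta> and h :: "'a \<times> int \<Rightarrow> int"
    using that K(1) L(1) by (intro sum.mono_neutral_cong_right) auto
  have "(\<Sum>p\<in>K \<union> L. \<gamma> p * ?I p x) = (\<Sum>p\<in>K. \<alpha> p * ?I p x) + (\<Sum>p\<in>L. \<beta> p * ?I p x)" for x
    unfolding \<gamma>_def distrib_right sum.distrib by (simp add: extend)
  then have "\<forall>x\<in>X. f x + g x = (\<Sum>p\<in>K \<union> L. \<gamma> p * ?I p x)"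
    using K(3) L(3) by simp
  then show ?thesis
    unfolding Hgrp_iff using K(1,2) L(1,2) by (intro exI[of _ "K \<union> L"] exI[of _ \<gamma>]) simp
qed

lemma Hgrp_diff: "f \<in> Hgrp A X \<Longrightarrow> g \<in> Hgrp A X \<Longrightarrow> (\<lambda>x. f x - g x) \<in> Hgrp A X"
  using Hgrp_add[OF _ Hgrp_uminus, of f A X g] by simp

lemma Hgrp_sum:
  "finite B \<Longrightarrow> (\<And>b. b \<in> B \<Longrightarrow> f b \<in> Hgrp A X) \<Longrightarrow> (\<lambda>x. \<Sum>b\<in>B. f b x) \<in> Hgrp A X"
proof (induction B rule: finite_induct)
  case empty
  then show ?case using Hgrp_zero by simp
next
  case (insert b B)
  then show ?case using Hgrp_add[of "f b" A X "\<lambda>x. \<Sum>b\<in>B. f b x"] by simp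
qed

lemma mem_shiftpow_cyl_letter:
  assumes "subshift A X" "x \<in> X"
  shows "x \<in> shiftpow k ` cyl X [a] \<longleftrightarrow> x (-k) = a"
proof
  assume "x \<in> shiftpow k ` cyl X [a]"
  then show "x (-k) = a" by (auto simp: cyl_def)
next
  assume "x (-k) = a"
  then have "shiftpow (-k) x \<in> cyl X [a]"
    using shiftpow_in_subshift[OF assms] by (simp add: cyl_def)
  moreover have "x = shiftpow k (shiftpow (-k) x)" by (simp add: shiftpow_add)
  ultimately show "x \<in> shiftpow k ` cyl X [a]" by blast
qed

lemma letter_indicator_in_Hgrp:
  assumes "subshift A X"
  shows "(\<lambda>x. of_bool (x i = a)) \<in> Hgrp A X"
proof (cases "a \<in> A")
  case True
  then show ?thesis
    unfolding Hgrp_iff using mem_shiftpow_cyl_letter[OF assms]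
    by (intro exI[of _ "{(a, -i)}"] exI[of _ "\<lambda>_. 1"]) auto
next
  case False
  then show ?thesis using subshift_values[OF assms] by (intro Hgrp_cong[OF Hgrp_zero]) auto
qed


lemma graph_acyclic_edge_cut:
  assumes acyclic: "graph_acyclic V E" and "symp E" and "p \<in> V" "p \<noteq> q" "E p q"
  obtains S where "p \<in> S" "q \<notin> S"
    "\<And>x y. x \<in> V \<Longrightarrow> y \<in> V \<Longrightarrow> E x y \<Longrightarrow> {x, y} \<noteq> {p, q} \<Longrightarrow> x \<in> S \<longleftrightarrow> y \<in> S"
proof
  define R where "R x y \<longleftrightarrow> x \<in> V \<and> y \<in> V \<and> E x y \<and> {x, y} \<noteq> {p, q}" for x y
  define S where "S = {y. R\<^sup>*\<^sup>* p y}"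
  show "p \<in> S" unfolding S_def by simp
  show "x \<in> S \<longleftrightarrow> y \<in> S" if "x \<in> V" "y \<in> V" "E x y" "{x, y} \<noteq> {p, q}" for x y
  proof -
    have "R x y" "R y x" using that \<open>symp E\<close> unfolding R_def by (auto dest: sympD)
    then show ?thesis unfolding S_def by (auto intro: rtranclp.rtrancl_into_rtrancl)
  qed
  show "q \<notin> S"
  proof
    assume "q \<in> S"
    then obtain xs where "rtrancl_path R p xs q"
      unfolding S_def by (auto simp: rtranclp_eq_rtrancl_path)
    then obtain ys where path: "rtrancl_path R p ys q" and "distinct (p # ys)"
      using rtrancl_path_distinct by metis
    have "ys \<noteq> []" using path \<open>p \<noteq> q\<close> by (auto elim: rtrancl_path.cases)
    then have last: "last (p # ys) = q" using rtrancl_path_last[OF path] by simp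
    have "ys \<noteq> [q]" using path unfolding R_def by (auto elim: rtrancl_path.cases)
    with \<open>ys \<noteq> []\<close> last have "length (p # ys) \<ge> 3"
      by (cases ys rule: rev_cases) (auto simp: Suc_le_eq)
    moreover have "set (p # ys) \<subseteq> V"
      using \<open>p \<in> V\<close> rtrancl_path_Range[OF path] unfolding R_def by auto
    moreover have "\<forall>i. Suc i < length (p # ys) \<longrightarrow> E ((p # ys) ! i) ((p # ys) ! Suc i)"
      using rtrancl_path_nth[OF path] unfolding R_def by auto
    moreover have "E (last (p # ys)) (hd (p # ys))"
      using last \<open>symp E\<close> \<open>E p q\<close> by (auto dest: sympD)
    ultimately show False using acyclic \<open>distinct (p # ys)\<close> unfolding graph_acyclic_def by blast
  qed
qed

lemma symp_ext_adj: "symp (ext_adj X w)"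
  unfolding symp_def ext_adj_def by blast

lemma Eext_edge:
  assumes "(a, b) \<in> Eext X w"
  shows "Inl a \<in> ext_vertices X w" "Inr b \<in> ext_vertices X w" "ext_adj X w (Inl a) (Inr b)"
proof -
  have "(a # w) @ [b] \<in> lang X" "[a] @ w @ [b] \<in> lang X" using assms unfolding Eext_def by simp_all
  then have "a # w \<in> lang X" "w @ [b] \<in> lang X" using lang_appendD by blast+
  then show "Inl a \<in> ext_vertices X w" "Inr b \<in> ext_vertices X w"
    unfolding ext_vertices_def Lext_def Rext_def by auto
  show "ext_adj X w (Inl a) (Inr b)" using assms unfolding ext_adj_def by blast
qed

lemma extension_graph_edge_cut:
  assumes "graph_acyclic (ext_vertices X w) (ext_adj X w)" "(c, d) \<in> Eext X w"
  obtains S where "Inl c \<in> S" "Inr d \<notin> S"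
    "\<And>a b. (a, b) \<in> Eext X w \<Longrightarrow> (a, b) \<noteq> (c, d) \<Longrightarrow> Inl a \<in> S \<longleftrightarrow> Inr b \<in> S"
proof -
  obtain S where "Inl c \<in> S" "Inr d \<notin> S" and cut:
    "\<And>u v. u \<in> ext_vertices X w \<Longrightarrow> v \<in> ext_vertices X w \<Longrightarrow> ext_adj X w u v \<Longrightarrow>
       {u, v} \<noteq> {Inl c, Inr d} \<Longrightarrow> u \<in> S \<longleftrightarrow> v \<in> S"
    using graph_acyclic_edge_cut[OF assms(1) symp_ext_adj Eext_edge(1)[OF assms(2)] sum.distinct(1)
      Eext_edge(3)[OF assms(2)]] by blast
  moreover have "Inl a \<in> S \<longleftrightarrow> Inr b \<in> S" if "(a, b) \<in> Eext X w" "(a, b) \<noteq> (c, d)" for a b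
    using cut[OF Eext_edge[OF that(1)]] that(2) by (auto simp: doubleton_eq_iff)
  ultimately show ?thesis using that by blast
qed

lemma two_sided_extension_in_Hgrp:
  assumes "subshift A X" "graph_acyclic (ext_vertices X w) (ext_adj X w)" "c # w @ [d] \<in> lang X"
    and left: "\<And>a. (\<lambda>x. of_bool (occurs_at (a # w) x i) :: int) \<in> Hgrp A X"
    and right: "\<And>b. (\<lambda>x. of_bool (occurs_at (w @ [b]) x (i + 1)) :: int) \<in> Hgrp A X"
  shows "(\<lambda>x. of_bool (occurs_at (c # w @ [d]) x i) :: int) \<in> Hgrp A X"
proof -
  have "(c, d) \<in> Eext X w" using assms(3) unfolding Eext_def by simp
  then obtain S where S: "Inl c \<in> S" "Inr d \<notin> S"
    "\<And>a b. (a, b) \<in> Eext X w \<Longrightarrow> (a, b) \<noteq> (c, d) \<Longrightarrow> Inl a \<in> S \<longleftrightarrow> Inr b \<in> S"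
    using extension_graph_edge_cut[OF assms(2)] by blast
  define L where "L = {a \<in> A. Inl a \<in> S}"
  define R where "R = {b \<in> A. Inr b \<in> S}"
  have "finite L" "finite R" using assms(1) unfolding subshift_def L_def R_def by auto
  have "(\<lambda>x. (\<Sum>a\<in>L. of_bool (occurs_at (a # w) x i)) -
      (\<Sum>b\<in>R. of_bool (occurs_at (w @ [b]) x (i + 1))) :: int) \<in> Hgrp A X"
    using \<open>finite L\<close> \<open>finite R\<close> left right by (intro Hgrp_diff Hgrp_sum)
  moreover have "(of_bool (occurs_at (c # w @ [d]) x i) :: int) =
     (\<Sum>a\<in>L. of_bool (occurs_at (a # w) x i)) - (\<Sum>b\<in>R. of_bool (occurs_at (w @ [b]) x (i + 1)))"
    if "x \<in> X" for x
  proof (cases "occurs_at w x (i + 1)")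
    case False
    then show ?thesis by (simp add: occurs_at_Cons occurs_at_append)
  next
    case True
    define a where "a = x i"
    define b where "b = x (i + 1 + int (length w))"
    have "a \<in> A" "b \<in> A" using subshift_values[OF assms(1) that] unfolding a_def b_def by auto
    have "(\<Sum>a'\<in>L. of_bool (occurs_at (a' # w) x i)) = (of_bool (Inl a \<in> S) :: int)"
      using True \<open>finite L\<close> \<open>a \<in> A\<close> by (simp add: occurs_at_Cons a_def L_def)
    moreover have "(\<Sum>b'\<in>R. of_bool (occurs_at (w @ [b']) x (i + 1))) = (of_bool (Inr b \<in> S) :: int)"
      using True \<open>finite R\<close> \<open>b \<in> A\<close> by (simp add: occurs_at_append b_def R_def)
    moreover have "occurs_at (c # w @ [d]) x i \<longleftrightarrow> (a, b) = (c, d)"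
      using True by (auto simp: occurs_at_Cons occurs_at_append a_def b_def)
    moreover have "(a, b) \<in> Eext X w"
      using True occurs_at_in_lang[OF that, of "a # w @ [b]" i] unfolding Eext_def
      by (simp add: occurs_at_Cons occurs_at_append a_def b_def)
    ultimately show ?thesis using S by (cases "(a, b) = (c, d)") auto
  qed
  ultimately show ?thesis by (rule Hgrp_cong)
qed

lemma word_indicator_in_Hgrp:
  assumes sub: "subshift A X"
    and acyclic: "\<And>w. w \<in> lang X \<Longrightarrow> graph_acyclic (ext_vertices X w) (ext_adj X w)"
  shows "(\<lambda>x. of_bool (occurs_at u x i) :: int) \<in> Hgrp A X"
proof (induction "length u" arbitrary: u i rule: less_induct)
  case less
  consider "u = []" | c where "u = [c]" | c w d where "u = c # w @ [d]"
    by (cases u; cases "tl u" rule: rev_cases) auto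
  then show ?case
  proof cases
    case 1
    have "finite A" using sub unfolding subshift_def by simp
    then have "(\<lambda>x. \<Sum>a\<in>A. of_bool (x 0 = a) :: int) \<in> Hgrp A X"
      by (intro Hgrp_sum letter_indicator_in_Hgrp[OF sub])
    then show ?thesis
      by (rule Hgrp_cong) (use 1 subshift_values[OF sub] \<open>finite A\<close> in simp)
  next
    case (2 c)
    then show ?thesis using letter_indicator_in_Hgrp[OF sub] by simp
  next
    case (3 c w d)
    show ?thesis
    proof (cases "u \<in> lang X")
      case False
      then show ?thesis using occurs_at_in_lang by (intro Hgrp_cong[OF Hgrp_zero]) fastforce
    next
      case True
      then have cwd: "c # w @ [d] \<in> lang X" using 3 by simp
      then have "w \<in> lang X"
        using lang_appendD[of "[c]" "w @ [d]"] lang_appendD[of w "[d]"] by simp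
      have "(\<lambda>x. of_bool (occurs_at (a # w) x i) :: int) \<in> Hgrp A X" for a
        using 3 by (intro less) simp
      moreover have "(\<lambda>x. of_bool (occurs_at (w @ [b]) x (i + 1)) :: int) \<in> Hgrp A X" for b
        using 3 by (intro less) simp
      ultimately show ?thesis
        unfolding 3 by (rule two_sided_extension_in_Hgrp[OF sub acyclic[OF \<open>w \<in> lang X\<close>] cwd])
    qed
  qed
qed

theorem lemma3p3:
  fixes A :: "'a set" and X :: "(int \<Rightarrow> 'a) set" and v :: "'a list"
  assumes "dendric A X"
    and "v \<in> lang X"
  shows "indicator (cyl X v) \<in> Hgrp A X"
proof -
  have "subshift A X" using assms(1) unfolding dendric_def minimal_subshift_def by blast
  moreover have "graph_acyclic (ext_vertices X w) (ext_adj X w)" if "w \<in> lang X" for w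
    using assms(1) that unfolding dendric_def graph_tree_def by blast
  ultimately have "(\<lambda>x. of_bool (occurs_at v x 0) :: int) \<in> Hgrp A X"
    by (rule word_indicator_in_Hgrp)
  then show ?thesis by (rule Hgrp_cong) (simp add: cyl_def indicator_def)
qed

end
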